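(* Let $(\mathcal F,d)$ be a metric space, $\Sigma=(\Sigma_M)_{M\in\mathbb N}$ a sequence of non-empty subsets of $\mathcal F$ and $\mathcal C\subset\mathcal F$ non-empty. If $\Sigma$ is $\gamma$-encodable for every $\gamma<\gamma^*(\mathcal C|\Sigma)$ (with $\gamma>0$), then $\gamma^*(\mathcal C|\Sigma)\le\gamma^*_e(\mathcal C)$.
   Context: Approximation speed: $\gamma^*(\mathcal C|\Sigma)=\sup\{\gamma\in\mathbb R:\sup_{f\in\mathcal C}\inf_{\Phi\in\Sigma_M}d(f,\Phi)=O(M^{-\gamma})\text{ as }M\to\infty\}\in[-\infty,\infty]$ ($\sup\emptyset=-\infty$). A finite $X\subset\mathcal C$ is an $\varepsilon$-covering of $\mathcal C$ if every point of $\mathcal C$ is within distance $\varepsilon$ of some point of $X$; $N(\mathcal C,d,\varepsilon)$ is the minimal size of such a covering ($+\infty$ if none), $H=\log_2N$, and $\gamma^*_e(\mathcal C)=\sup\{\gamma>0:H(\mathcal C,d,\varepsilon)=O(\varepsilon^{-1/\gamma})\text{ as }\varepsilon\to0\}$ ($0$ if empty). For $\gamma,h>0$, a $(\gamma,h)$-encoding of $\Sigma$ is a sequence $(\Sigma(\gamma,h)_M)_M$ such that for some $c_1,c_2>0$ and all $M$, $\Sigma(\gamma,h)_M$ is a $c_1M^{-\gamma}$-covering of $\Sigma_M$ with $\log_2|\Sigma(\gamma,h)_M|\le c_2M^{1+h}$. $\Sigma$ is $\gamma$-encodable if it admits a $(\gamma,h)$-encoding for every $h>0$. *)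

theory Defs
  imports "HOL-Analysis.Analysis" "HOL-Library.Extended_Real" "HOL-Library.Extended_Nat"
begin

definition approx_error :: "'a::metric_space set \<Rightarrow> (nat \<Rightarrow> 'a set) \<Rightarrow> nat \<Rightarrow> ereal" where
  "approx_error C \<Sigma> M = (SUP f\<in>C. INF \<Phi>\<in>\<Sigma> M. ereal (dist f \<Phi>))"

text \<open>Approximation speed gamma*(C|Sigma) in [-inf, inf]; Sup of the empty set is -inf.\<close>
definition approx_speed :: "'a::metric_space set \<Rightarrow> (nat \<Rightarrow> 'a set) \<Rightarrow> ereal" where
  "approx_speed C \<Sigma> = Sup (ereal ` {\<gamma>::real. \<exists>c::real.
      \<forall>\<^sub>F M in sequentially. approx_error C \<Sigma> M \<le> ereal (c * real M powr (-\<gamma>))})"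

definition is_covering :: "'a::metric_space set \<Rightarrow> 'a set \<Rightarrow> real \<Rightarrow> bool" where
  "is_covering C X \<epsilon> \<longleftrightarrow> finite X \<and> X \<subseteq> C \<and> (\<forall>x\<in>C. \<exists>y\<in>X. dist x y \<le> \<epsilon>)"

definition covering_number :: "'a::metric_space set \<Rightarrow> real \<Rightarrow> enat" where
  "covering_number C \<epsilon> =
     (if \<exists>X. is_covering C X \<epsilon>
      then enat (LEAST n. \<exists>X. is_covering C X \<epsilon> \<and> card X = n) else \<infinity>)"

definition metric_entropy :: "'a::metric_space set \<Rightarrow> real \<Rightarrow> ereal" where
  "metric_entropy C \<epsilon> = (case covering_number C \<epsilon> of enat n \<Rightarrow> ereal (log 2 (real n)) | \<infinity> \<Rightarrow> \<infinity>)"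

definition entropy_speed_set :: "'a::metric_space set \<Rightarrow> real set" where
  "entropy_speed_set C = {\<gamma>::real. \<gamma> > 0 \<and> (\<exists>c::real.
      \<forall>\<^sub>F \<epsilon> in at_right 0. metric_entropy C \<epsilon> \<le> ereal (c * \<epsilon> powr (-1/\<gamma>)))}"

definition entropy_speed :: "'a::metric_space set \<Rightarrow> ereal" where
  "entropy_speed C = (if entropy_speed_set C = {} then 0 else Sup (ereal ` entropy_speed_set C))"

definition is_encoding :: "(nat \<Rightarrow> 'a::metric_space set) \<Rightarrow> real \<Rightarrow> real \<Rightarrow> (nat \<Rightarrow> 'a set) \<Rightarrow> bool" where
  "is_encoding \<Sigma> \<gamma> h E \<longleftrightarrow> (\<exists>c1 c2::real. c1 > 0 \<and> c2 > 0 \<and>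
     (\<forall>M\<ge>1. is_covering (\<Sigma> M) (E M) (c1 * real M powr (-\<gamma>)) \<and>
              log 2 (real (card (E M))) \<le> c2 * real M powr (1 + h)))"

definition encodable :: "(nat \<Rightarrow> 'a::metric_space set) \<Rightarrow> real \<Rightarrow> bool" where
  "encodable \<Sigma> \<gamma> \<longleftrightarrow> (\<forall>h>0. \<exists>E. is_encoding \<Sigma> \<gamma> h E)"

end

theory Submission
  imports Defs
begin

text \<open>Fix \<open>0 < r < \<gamma> < \<gamma>*(C|\<Sigma>)\<close> and an encoding of \<open>\<Sigma>\<close> at rate \<open>\<gamma>\<close> using
  \<open>M^(1+h)\<close> bits with \<open>1 + h = \<gamma>/r\<close>. Since \<open>\<Sigma>_M\<close> approximates \<open>C\<close> to within
  \<open>O(M^-\<gamma>)\<close>, the encoding of \<open>\<Sigma>_M\<close> covers \<open>C\<close> at radius \<open>O(M^-\<gamma>)\<close>; moving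
  its centres into \<open>C\<close> only doubles the radius. Taking \<open>M \<approx> \<epsilon>^(-1/\<gamma>)\<close> gives
  \<open>H(C,\<epsilon>) = O(\<epsilon>^(-1/r))\<close>, so every such \<open>r\<close> is an entropy exponent.\<close>

lemma covering_within_set:
  fixes C E :: "'a::metric_space set"
  assumes "finite E" and "\<forall>x\<in>C. \<exists>e\<in>E. dist x e \<le> \<rho>"
  shows "\<exists>X. is_covering C X (2 * \<rho>) \<and> card X \<le> card E"
proof -
  define E' where "E' = {e\<in>E. \<exists>x\<in>C. dist x e \<le> \<rho>}"
  define pick where "pick e = (SOME x. x \<in> C \<and> dist x e \<le> \<rho>)" for e
  have pick: "pick e \<in> C \<and> dist (pick e) e \<le> \<rho>" if "e \<in> E'" for e
    using someI_ex[of "\<lambda>x. x \<in> C \<and> dist x e \<le> \<rho>"] that unfolding E'_def pick_def by auto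
  have "finite E'" using assms(1) unfolding E'_def by auto
  have "card (pick ` E') \<le> card E'" by (rule card_image_le[OF \<open>finite E'\<close>])
  also have "\<dots> \<le> card E" using assms(1) unfolding E'_def by (intro card_mono) auto
  finally have card_le: "card (pick ` E') \<le> card E" .
  have "\<exists>y\<in>pick ` E'. dist x y \<le> 2 * \<rho>" if "x \<in> C" for x
  proof -
    obtain e where e: "e \<in> E" "dist x e \<le> \<rho>" using assms(2) \<open>x \<in> C\<close> by auto
    hence "e \<in> E'" using \<open>x \<in> C\<close> unfolding E'_def by auto
    have "dist x (pick e) \<le> dist x e + dist (pick e) e" by (rule dist_triangle2)
    also have "\<dots> \<le> 2 * \<rho>" using pick[OF \<open>e \<in> E'\<close>] e by simp
    finally show ?thesis using \<open>e \<in> E'\<close> by auto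
  qed
  thus ?thesis using card_le \<open>finite E'\<close> pick unfolding is_covering_def by blast
qed

lemma metric_entropy_le_log_card:
  fixes C X :: "'a::metric_space set"
  assumes "is_covering C X \<epsilon>" and "C \<noteq> {}"
  shows "metric_entropy C \<epsilon> \<le> ereal (log 2 (real (card X)))"
proof -
  define m where "m = (LEAST n. \<exists>X. is_covering C X \<epsilon> \<and> card X = n)"
  have "covering_number C \<epsilon> = enat m" using assms(1) unfolding covering_number_def m_def by auto
  hence entropy: "metric_entropy C \<epsilon> = ereal (log 2 (real m))" by (simp add: metric_entropy_def)
  have "m \<le> card X" unfolding m_def by (rule Least_le) (use assms(1) in auto)
  obtain Y where Y: "is_covering C Y \<epsilon>" "card Y = m"
    using LeastI[of "\<lambda>n. \<exists>X. is_covering C X \<epsilon> \<and> card X = n" "card X"] assms(1)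
    unfolding m_def by auto
  have "m > 0" using Y assms(2) unfolding is_covering_def by auto
  hence "log 2 (real m) \<le> log 2 (real (card X))" using \<open>m \<le> card X\<close> by simp
  thus ?thesis using entropy by simp
qed

lemma exists_scale_for_radius:
  assumes "0 < g" "0 < a" "0 < K" "1 \<le> real N" "0 < \<epsilon>" "\<epsilon> < K * real N powr (-g)"
  shows "\<exists>M\<ge>N. K * real M powr (-g) \<le> \<epsilon> \<and>
           real M powr a \<le> 2 powr a * K powr (a/g) * \<epsilon> powr (-(a/g))"
proof -
  define t where "t = (K/\<epsilon>) powr (1/g)"
  have "real N powr g \<le> K/\<epsilon>"
    using assms(4-6) by (simp add: powr_minus_divide field_simps)
  hence "(real N powr g) powr (1/g) \<le> t"
    unfolding t_def using assms(1,4) by (intro powr_mono2) auto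
  hence "real N \<le> t" using assms(1,4) by (simp add: powr_powr)
  hence "1 \<le> t" using assms(4) by simp
  define M where "M = nat \<lceil>t\<rceil>"
  have Mt: "t \<le> real M" "real M \<le> 2 * t" unfolding M_def using \<open>1 \<le> t\<close> by linarith+
  have "real M powr (-g) \<le> t powr (-g)" using Mt \<open>1 \<le> t\<close> assms(1) by (intro powr_mono2') auto
  also have "\<dots> = \<epsilon> / K" unfolding t_def using assms(1,3,5) by (simp add: powr_powr powr_minus_divide)
  finally have radius: "K * real M powr (-g) \<le> \<epsilon>" using assms(3) by (simp add: field_simps)
  have "real M powr a \<le> (2 * t) powr a" using Mt \<open>1 \<le> t\<close> assms(2) by (intro powr_mono2) auto
  also have "\<dots> = 2 powr a * K powr (a/g) * \<epsilon> powr (-(a/g))"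
    unfolding t_def using assms(3,5)
    by (simp add: powr_mult powr_powr powr_divide powr_minus_divide)
  finally show ?thesis using radius \<open>real N \<le> t\<close> Mt(1) by (intro exI[of _ M]) auto
qed

lemma entropy_speed_set_if_coverings:
  fixes C :: "'a::metric_space set"
  assumes "C \<noteq> {}" "0 < g" "0 < r" "0 < K" "0 \<le> c" "1 \<le> N"
    and covers: "\<And>M. M \<ge> N \<Longrightarrow> \<exists>X. is_covering C X (K * real M powr (-g)) \<and>
                                    log 2 (real (card X)) \<le> c * real M powr (g/r)"
  shows "r \<in> entropy_speed_set C"
proof -
  define c' where "c' = c * (2 powr (g/r) * K powr (1/r))"
  have "metric_entropy C \<epsilon> \<le> ereal (c' * \<epsilon> powr (-1/r))"
    if eps: "0 < \<epsilon>" "\<epsilon> < K * real N powr (-g)" for \<epsilon>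
  proof -
    have exponent: "0 < g/r" "(g/r)/g = 1/r" using assms(2,3) by auto
    have "1 \<le> real N" using assms(6) by simp
    then obtain M where "M \<ge> N" and radius: "K * real M powr (-g) \<le> \<epsilon>"
      and size: "real M powr (g/r) \<le> 2 powr (g/r) * K powr (1/r) * \<epsilon> powr (-(1/r))"
      using exists_scale_for_radius[OF assms(2) exponent(1) assms(4) _ eps]
      unfolding exponent(2) by blast
    obtain X where X: "is_covering C X (K * real M powr (-g))"
      and bits: "log 2 (real (card X)) \<le> c * real M powr (g/r)"
      using covers[OF \<open>M \<ge> N\<close>] by blast
    have "is_covering C X \<epsilon>" using X radius unfolding is_covering_def by force
    hence "metric_entropy C \<epsilon> \<le> ereal (log 2 (real (card X)))"
      using metric_entropy_le_log_card assms(1) by blast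
    also have "\<dots> \<le> ereal (c' * \<epsilon> powr (-1/r))"
      using bits mult_left_mono[OF size assms(5)] unfolding c'_def by (simp add: mult_ac)
    finally show ?thesis .
  qed
  moreover have "0 < K * real N powr (-g)" using assms(4,6) by simp
  ultimately have "\<forall>\<^sub>F \<epsilon> in at_right 0. metric_entropy C \<epsilon> \<le> ereal (c' * \<epsilon> powr (-1/r))"
    unfolding eventually_at_right_field by blast
  thus ?thesis unfolding entropy_speed_set_def using assms(3) by auto
qed

lemma covering_of_class_from_encoding:
  fixes C :: "'a::metric_space set"
  assumes approx: "\<forall>\<^sub>F M in sequentially. approx_error C \<Sigma> M \<le> ereal (c * real M powr (-g'))"
    and "g \<le> g'"
    and encoding: "\<And>M. M \<ge> 1 \<Longrightarrow> is_covering (\<Sigma> M) (E M) (c1 * real M powr (-g))"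
  shows "\<exists>K N. 0 < K \<and> 1 \<le> N \<and> (\<forall>M\<ge>N. \<forall>f\<in>C. \<exists>e\<in>E M. dist f e \<le> K * real M powr (-g))"
proof -
  obtain N0 where N0: "\<And>M. M \<ge> N0 \<Longrightarrow> approx_error C \<Sigma> M \<le> ereal (c * real M powr (-g'))"
    using approx unfolding eventually_sequentially by auto
  define K where "K = \<bar>c\<bar> + 1 + \<bar>c1\<bar>"
  have "\<exists>e\<in>E M. dist f e \<le> K * real M powr (-g)" if "M \<ge> max N0 1" "f \<in> C" for M f
  proof -
    have "M \<ge> 1" using that(1) by simp
    have "(INF \<Phi>\<in>\<Sigma> M. ereal (dist f \<Phi>)) \<le> approx_error C \<Sigma> M"
      unfolding approx_error_def using \<open>f \<in> C\<close> by (rule SUP_upper)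
    also have "\<dots> \<le> ereal (c * real M powr (-g'))" using N0 that(1) by auto
    also have "\<dots> < ereal ((c + 1) * real M powr (-g'))" using that(1) by (simp add: algebra_simps)
    finally obtain \<Phi> where \<Phi>: "\<Phi> \<in> \<Sigma> M" "dist f \<Phi> < (c + 1) * real M powr (-g')"
      unfolding INF_less_iff by auto
    obtain e where e: "e \<in> E M" "dist \<Phi> e \<le> c1 * real M powr (-g)"
      using encoding[OF \<open>M \<ge> 1\<close>] \<Phi>(1) unfolding is_covering_def by blast
    have "real M powr (-g') \<le> real M powr (-g)" using that(1) assms(2) by (intro powr_mono) auto
    hence "(c + 1) * real M powr (-g') \<le> (\<bar>c\<bar> + 1) * real M powr (-g)" by (intro mult_mono) auto
    moreover have "c1 * real M powr (-g) \<le> \<bar>c1\<bar> * real M powr (-g)" by (intro mult_right_mono) auto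
    ultimately have "dist f \<Phi> + dist \<Phi> e \<le> K * real M powr (-g)"
      using \<Phi>(2) e(2) unfolding K_def by (simp add: algebra_simps)
    thus ?thesis using e(1) dist_triangle[of f e \<Phi>] by force
  qed
  moreover have "0 < K" unfolding K_def by simp
  ultimately show ?thesis by (intro exI[of _ K] exI[of _ "max N0 1"]) auto
qed

lemma encodable_imp_in_entropy_speed_set:
  fixes C :: "'a::metric_space set"
  assumes "C \<noteq> {}" "0 < r" "r < g" "g \<le> g'"
    and approx: "\<forall>\<^sub>F M in sequentially. approx_error C \<Sigma> M \<le> ereal (c * real M powr (-g'))"
    and "encodable \<Sigma> g"
  shows "r \<in> entropy_speed_set C"
proof -
  have "g/r - 1 > 0" using assms(2,3) by (simp add: field_simps)
  then obtain E c1 c2 where "c2 > 0"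
    and E: "\<And>M. M \<ge> 1 \<Longrightarrow> is_covering (\<Sigma> M) (E M) (c1 * real M powr (-g)) \<and>
                 log 2 (real (card (E M))) \<le> c2 * real M powr (1 + (g/r - 1))"
    using \<open>encodable \<Sigma> g\<close> unfolding encodable_def is_encoding_def by blast
  obtain K N where "0 < K" "1 \<le> N"
    and close: "\<And>M f. M \<ge> N \<Longrightarrow> f \<in> C \<Longrightarrow> \<exists>e\<in>E M. dist f e \<le> K * real M powr (-g)"
    using covering_of_class_from_encoding[OF approx \<open>g \<le> g'\<close>, of E c1] E by blast
  have "\<exists>X. is_covering C X (2 * K * real M powr (-g)) \<and>
            log 2 (real (card X)) \<le> c2 * real M powr (g/r)" if "M \<ge> N" for M
  proof -
    have "\<forall>f\<in>C. \<exists>e\<in>E M. dist f e \<le> K * real M powr (-g)" using close that by blast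
    moreover have "finite (E M)" using E[of M] that \<open>1 \<le> N\<close> unfolding is_covering_def by auto
    ultimately obtain X where X: "is_covering C X (2 * (K * real M powr (-g)))" "card X \<le> card (E M)"
      using covering_within_set by blast
    have "card X > 0" using X(1) assms(1) unfolding is_covering_def by auto
    hence "log 2 (real (card X)) \<le> log 2 (real (card (E M)))" using X(2) by simp
    also have "\<dots> \<le> c2 * real M powr (g/r)" using E[of M] that \<open>1 \<le> N\<close> by simp
    finally show ?thesis using X(1) by (auto simp: mult.assoc)
  qed
  thus ?thesis
    using entropy_speed_set_if_coverings[of C g r "2 * K" c2 N] assms(1-3) \<open>0 < K\<close> \<open>c2 > 0\<close> \<open>1 \<le> N\<close>
    by auto
qed

lemma less_approx_speedE:
  assumes "ereal r < approx_speed C \<Sigma>"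
  obtains g' c where "r < g'" "ereal g' \<le> approx_speed C \<Sigma>"
    "\<forall>\<^sub>F M in sequentially. approx_error C \<Sigma> M \<le> ereal (c * real M powr (-g'))"
proof -
  obtain g' c where "r < g'"
    and approx: "\<forall>\<^sub>F M in sequentially. approx_error C \<Sigma> M \<le> ereal (c * real M powr (-g'))"
    using assms unfolding approx_speed_def less_Sup_iff by auto
  moreover have "ereal g' \<le> approx_speed C \<Sigma>"
    unfolding approx_speed_def using approx by (intro Sup_upper) auto
  ultimately show ?thesis using that by blast
qed

lemma le_entropy_speed:
  assumes "r \<in> entropy_speed_set C"
  shows "ereal r \<le> entropy_speed C"
  using assms unfolding entropy_speed_def by (auto intro: Sup_upper)

lemma entropy_speed_nonneg: "0 \<le> entropy_speed C"
proof (cases "entropy_speed_set C = {}")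
  case False
  then obtain r where "r \<in> entropy_speed_set C" by auto
  moreover from this have "0 < r" by (simp add: entropy_speed_set_def)
  ultimately show ?thesis using le_entropy_speed[of r C] by (simp add: order.trans[of 0 "ereal r"])
qed (simp add: entropy_speed_def)

theorem mainTheorem10:
  fixes \<Sigma> :: "nat \<Rightarrow> 'a::metric_space set" and C :: "'a set"
  assumes "\<And>M. M \<ge> 1 \<Longrightarrow> \<Sigma> M \<noteq> {}"
    and "C \<noteq> {}"
    and "\<And>\<gamma>. \<gamma> > 0 \<Longrightarrow> ereal \<gamma> < approx_speed C \<Sigma> \<Longrightarrow> encodable \<Sigma> \<gamma>"
  shows "approx_speed C \<Sigma> \<le> entropy_speed C"
proof (rule dense_le)
  fix y assume y: "y < approx_speed C \<Sigma>"
  show "y \<le> entropy_speed C"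
  proof (cases "y \<le> 0")
    case True
    thus ?thesis using entropy_speed_nonneg order.trans by blast
  next
    case False
    then obtain r where r: "y = ereal r" "0 < r" using y by (cases y) auto
    then obtain g' c where "r < g'" "ereal g' \<le> approx_speed C \<Sigma>"
      and approx: "\<forall>\<^sub>F M in sequentially. approx_error C \<Sigma> M \<le> ereal (c * real M powr (-g'))"
      using y less_approx_speedE by metis
    define g where "g = (r + g') / 2"
    have "r < g" "g < g'" using \<open>r < g'\<close> unfolding g_def by auto
    hence "ereal g < approx_speed C \<Sigma>"
      using \<open>ereal g' \<le> approx_speed C \<Sigma>\<close> less_le_trans[of "ereal g" "ereal g'"] by simp
    hence "encodable \<Sigma> g" using assms(3) \<open>r < g\<close> r(2) by auto
    hence "r \<in> entropy_speed_set C"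
      using encodable_imp_in_entropy_speed_set[OF assms(2) r(2) \<open>r < g\<close> _ approx] \<open>g < g'\<close> by simp
    thus ?thesis using r(1) le_entropy_speed by simp
  qed
qed

end
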